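(* Let $X$ be a Banach lattice with order continuous norm, and let $S$ be a convex $C_0$-semigroup on $X$ with generator $A\colon D(A)\subset X\to X$. Let $y\colon[0,\infty)\to X$ be a continuous function such that $y(t)\in D(A)$ for all $t\ge 0$ and $\lim_{h\downarrow 0}\frac{y(t+h)-y(t)}{h}=Ay(t)$ for all $t\ge 0$. Then $y(t)=S(t)x$ for all $t\ge 0$, where $x:=y(0)$.
   Context: A Banach lattice $X$ has order continuous norm if $\|x_\alpha\|\to 0$ for every net $x_\alpha\downarrow 0$. An operator $T\colon X\to X$ is convex if $T(\lambda x+(1-\lambda)y)\le \lambda Tx+(1-\lambda)Ty$ for all $x,y$, $\lambda\in[0,1]$, and bounded if $\sup_{\|x\|\le r}\|Tx\|<\infty$ for all $r>0$. A convex $C_0$-semigroup is a family $(S(t))_{t\ge0}$ of bounded convex operators $X\to X$ with $S(0)=\mathrm{id}$, $S(t+s)=S(t)S(s)$ for all $s,t\ge0$, and $S(t)x\to x$ as $t\downarrow 0$ for all $x$. Its generator is $Ax:=\lim_{h\downarrow 0}\frac{S(h)x-x}{h}$ with domain $D(A)$ the set of $x$ for which this norm limit exists. *)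

theory Defs
  imports "HOL-Analysis.Analysis"
begin

class banach_lattice = banach + ordered_real_vector + lattice +
  assumes lattice_norm: "sup x (- x) \<le> sup y (- y) \<Longrightarrow> norm x \<le> norm y"

text \<open>Order continuous norm: for every downward directed family x_\<alpha> \<down> 0
  (i.e. a decreasing net, indexed by the downward directed set D of its values
  with the reversed order, whose infimum is 0) we have norm x_\<alpha> \<rightarrow> 0 along
  the net.\<close>
definition order_continuous_norm :: "'a::banach_lattice itself \<Rightarrow> bool" where
  "order_continuous_norm _ \<longleftrightarrow>
    (\<forall>D::'a set.
       (D \<noteq> {} \<and> (\<forall>a\<in>D. \<forall>b\<in>D. \<exists>c\<in>D. c \<le> a \<and> c \<le> b)
        \<and> (\<forall>d\<in>D. 0 \<le> d) \<and> (\<forall>z. (\<forall>d\<in>D. z \<le> d) \<longrightarrow> z \<le> 0))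
       \<longrightarrow> (\<forall>\<epsilon>>0. \<exists>d0\<in>D. \<forall>d\<in>D. d \<le> d0 \<longrightarrow> norm d < \<epsilon>))"

definition convex_operator :: "('a::banach_lattice \<Rightarrow> 'a) \<Rightarrow> bool" where
  "convex_operator T \<longleftrightarrow>
    (\<forall>x y. \<forall>c::real. 0 \<le> c \<and> c \<le> 1 \<longrightarrow>
       T (c *\<^sub>R x + (1 - c) *\<^sub>R y) \<le> c *\<^sub>R T x + (1 - c) *\<^sub>R T y)"

definition bounded_operator :: "('a::real_normed_vector \<Rightarrow> 'b::real_normed_vector) \<Rightarrow> bool" where
  "bounded_operator T \<longleftrightarrow> (\<forall>r>0. \<exists>C. \<forall>x. norm x \<le> r \<longrightarrow> norm (T x) \<le> C)"

text \<open>Convex C_0-semigroup; S t is only relevant for t \<ge> 0.\<close>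
definition convex_C0_semigroup :: "(real \<Rightarrow> 'a::banach_lattice \<Rightarrow> 'a) \<Rightarrow> bool" where
  "convex_C0_semigroup S \<longleftrightarrow>
    (\<forall>t\<ge>0. convex_operator (S t) \<and> bounded_operator (S t))
    \<and> S 0 = id
    \<and> (\<forall>s\<ge>0. \<forall>t\<ge>0. S (t + s) = S t \<circ> S s)
    \<and> (\<forall>x. ((\<lambda>t. S t x) \<longlongrightarrow> x) (at_right 0))"

definition gen_domain :: "(real \<Rightarrow> 'a::real_normed_vector \<Rightarrow> 'a) \<Rightarrow> 'a set" where
  "gen_domain S = {x. \<exists>L. ((\<lambda>h. (1 / h) *\<^sub>R (S h x - x)) \<longlongrightarrow> L) (at_right 0)}"

definition generator :: "(real \<Rightarrow> 'a::real_normed_vector \<Rightarrow> 'a) \<Rightarrow> 'a \<Rightarrow> 'a" where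
  "generator S x = Lim (at_right 0) (\<lambda>h. (1 / h) *\<^sub>R (S h x - x))"

end

(* For fixed t >= 0 consider phi s = S (t - s) (y s) on [0, t]. The orbits of the semigroup are
   bounded on [0, t], so by Baire's theorem the operators S r, r in [0, t], are uniformly bounded on
   some ball. In a Banach lattice a convex operator that is bounded above near z is also bounded
   below there, which moves this bound to a ball around any point, and a convex operator bounded
   on a ball is Lipschitz on a smaller one. With these uniform local Lipschitz constants phi is
   continuous, and its right difference quotients at s are at most
   L * norm ((y (s + h) - y s) / h - (S h (y s) - y s) / h), which tends to 0. A continuous
   function with vanishing right derivative is constant, so y t = phi t = phi 0 = S t (y 0). *)

theory Submission
  imports Defs
begin

section \<open>Banach lattices\<close>

lemma sup_neg_nonneg:
  fixes x :: "'a::{ordered_real_vector, lattice}"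
  shows "0 \<le> sup x (- x)"
proof -
  have "x + - x \<le> sup x (- x) + sup x (- x)"
    by (intro add_mono) simp_all
  then have "(1/2::real) *\<^sub>R 0 \<le> (1/2::real) *\<^sub>R (2 *\<^sub>R sup x (- x))"
    by (intro scaleR_left_mono) (auto simp: scaleR_2)
  then show ?thesis
    by simp
qed

lemma sup_neg_eq_self:
  fixes x :: "'a::{ordered_ab_group_add, lattice}"
  assumes "0 \<le> x"
  shows "sup x (- x) = x"
  using assms by (intro sup_absorb1) (meson neg_le_0_iff_le order_trans)

lemma norm_sup_neg [simp]:
  fixes x :: "'a::banach_lattice"
  shows "norm (sup x (- x)) = norm x"
  using lattice_norm[of x "sup x (- x)"] lattice_norm[of "sup x (- x)" x]
  by (simp add: sup_neg_eq_self[OF sup_neg_nonneg])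

lemma norm_le_of_le_and_neg_le:
  fixes a u v :: "'a::banach_lattice"
  assumes "a \<le> u" "- a \<le> v"
  shows "norm a \<le> norm u + norm v"
proof -
  let ?w = "sup u (- u) + sup v (- v)"
  have w_nonneg: "0 \<le> ?w"
    by (simp add: add_nonneg_nonneg sup_neg_nonneg)
  have "a \<le> ?w"
    using assms(1) sup_neg_nonneg[of v] by (meson add_increasing2 order_trans sup_ge1)
  moreover have "- a \<le> ?w"
    using assms(2) sup_neg_nonneg[of u] by (meson add_increasing order_trans sup_ge1)
  ultimately have "sup a (- a) \<le> sup ?w (- ?w)"
    unfolding sup_neg_eq_self[OF w_nonneg] by (rule sup_least)
  then have "norm a \<le> norm ?w"
    by (rule lattice_norm)
  also have "\<dots> \<le> norm u + norm v"
    using norm_triangle_ineq[of "sup u (- u)" "sup v (- v)"] by simp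
  finally show ?thesis .
qed

section \<open>Convex operators\<close>

lemma convex_operatorD:
  assumes "convex_operator T" "0 \<le> c" "c \<le> 1"
  shows "T (c *\<^sub>R x + (1 - c) *\<^sub>R y) \<le> c *\<^sub>R T x + (1 - c) *\<^sub>R T y"
  using assms unfolding convex_operator_def by blast

lemma convex_operator_midpoint:
  assumes "convex_operator T"
  shows "2 *\<^sub>R T x \<le> T (x + h) + T (x - h)"
proof -
  have "T ((1/2) *\<^sub>R (x + h) + (1 - 1/2) *\<^sub>R (x - h))
      \<le> (1/2) *\<^sub>R T (x + h) + (1 - 1/2) *\<^sub>R T (x - h)"
    by (rule convex_operatorD[OF assms]) auto
  moreover have "(1/2) *\<^sub>R (x + h) + (1 - 1/2) *\<^sub>R (x - h) = x"
    by (simp add: algebra_simps flip: scaleR_add_left)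
  ultimately have "T x \<le> (1/2::real) *\<^sub>R (T (x + h) + T (x - h))"
    by (simp add: scaleR_add_right)
  then have "2 *\<^sub>R T x \<le> (2::real) *\<^sub>R ((1/2::real) *\<^sub>R (T (x + h) + T (x - h)))"
    by (rule scaleR_left_mono) simp
  then show ?thesis
    by simp
qed

lemma convex_operator_increment_le:
  assumes "convex_operator T" "0 \<le> c" "c \<le> 1"
  shows "T (x + c *\<^sub>R h) - T x \<le> c *\<^sub>R (T (x + h) - T x)"
proof -
  have "T (c *\<^sub>R (x + h) + (1 - c) *\<^sub>R x) \<le> c *\<^sub>R T (x + h) + (1 - c) *\<^sub>R T x"
    by (rule convex_operatorD[OF assms])
  then show ?thesis
    by (simp add: algebra_simps le_diff_eq)
qed

lemma convex_operator_increment_ge: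
  assumes "convex_operator T" "0 \<le> c" "c \<le> 1"
  shows "T x - T (x + c *\<^sub>R h) \<le> c *\<^sub>R (T (x - h) - T x)"
proof -
  have "T x - T (x + c *\<^sub>R h) \<le> T (x + c *\<^sub>R (- h)) - T x"
    using convex_operator_midpoint[OF assms(1), of x "c *\<^sub>R h"]
    by (simp add: algebra_simps scaleR_2 le_diff_eq diff_le_eq)
  also have "\<dots> \<le> c *\<^sub>R (T (x - h) - T x)"
    using convex_operator_increment_le[OF assms, of x "- h"] by simp
  finally show ?thesis .
qed

lemma convex_operator_lipschitz_at_center:
  fixes T :: "'a::banach_lattice \<Rightarrow> 'a"
  assumes conv: "convex_operator T" and R: "R > 0"
    and bound: "\<forall>w\<in>cball x R. norm (T w) \<le> M" and x': "x' \<in> cball x R"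
  shows "norm (T x' - T x) \<le> 4 * M / R * norm (x' - x)"
proof (cases "x' = x")
  case False
  define c where "c = norm (x' - x) / R"
  define h where "h = (1 / c) *\<^sub>R (x' - x)"
  have c: "0 < c" "c \<le> 1"
    using False R x' by (auto simp: c_def dist_norm norm_minus_commute)
  have x'_eq: "x' = x + c *\<^sub>R h"
    using c by (simp add: h_def)
  have "x + h \<in> cball x R" "x - h \<in> cball x R" "x \<in> cball x R"
    using c R by (simp_all add: h_def c_def dist_norm)
  then have "norm (T (x + h)) \<le> M" "norm (T (x - h)) \<le> M" "norm (T x) \<le> M"
    using bound by blast+
  then have increments: "norm (T (x + h) - T x) + norm (T (x - h) - T x) \<le> 4 * M"
    using norm_triangle_ineq4[of "T (x + h)" "T x"] norm_triangle_ineq4[of "T (x - h)" "T x"]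
    by linarith
  \<comment> \<open>convexity bounds \<open>T x' - T x\<close> above and below by increments towards \<open>x + h\<close> and \<open>x - h\<close>\<close>
  have "norm (T x' - T x) \<le> norm (c *\<^sub>R (T (x + h) - T x)) + norm (c *\<^sub>R (T (x - h) - T x))"
    unfolding x'_eq using c
    by (intro norm_le_of_le_and_neg_le convex_operator_increment_le[OF conv])
      (simp_all add: convex_operator_increment_ge[OF conv])
  also have "\<dots> = c * (norm (T (x + h) - T x) + norm (T (x - h) - T x))"
    using c by (simp add: distrib_left)
  also have "\<dots> \<le> c * (4 * M)"
    using c increments by (intro mult_left_mono) auto
  finally show ?thesis
    by (simp add: c_def mult.commute)
qed simp

lemma bounded_operatorD:
  assumes "bounded_operator T"
  shows "\<exists>C. \<forall>x. norm x \<le> r \<longrightarrow> norm (T x) \<le> C"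
proof -
  have "max r 1 > 0"
    by simp
  then obtain C where "\<forall>x. norm x \<le> max r 1 \<longrightarrow> norm (T x) \<le> C"
    using assms unfolding bounded_operator_def by blast
  then show ?thesis
    by (intro exI[of _ C]) (simp add: le_max_iff_disj)
qed

lemma convex_operator_continuous:
  fixes T :: "'a::banach_lattice \<Rightarrow> 'a"
  assumes conv: "convex_operator T" and bdd: "bounded_operator T"
  shows "continuous_on UNIV T"
proof (intro continuous_at_imp_continuous_on ballI)
  fix x :: 'a
  obtain M where M: "\<forall>w. norm w \<le> norm x + 1 \<longrightarrow> norm (T w) \<le> M"
    using bounded_operatorD[OF bdd] by blast
  have "\<forall>w\<in>cball x 1. norm (T w) \<le> M"
  proof
    fix w assume "w \<in> cball x 1"
    then have "norm w \<le> norm x + 1"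
      using norm_triangle_sub[of w x] by (simp add: dist_norm norm_minus_commute)
    then show "norm (T w) \<le> M"
      using M by blast
  qed
  then have "\<forall>\<^sub>F x' in at x. norm (T x' - T x) \<le> 4 * M * norm (x' - x)"
    using convex_operator_lipschitz_at_center[OF conv, of 1 x M]
    by (auto simp: eventually_at dist_norm norm_minus_commute intro!: exI[of _ 1])
  then have "((\<lambda>x'. T x' - T x) \<longlongrightarrow> 0) (at x)"
    by (rule Lim_null_comparison) (auto intro!: tendsto_eq_intros)
  then show "isCont T x"
    by (simp add: isCont_def LIM_zero_iff)
qed

section \<open>Uniform boundedness for families of convex operators\<close>

lemma pointwise_bounded_imp_bounded_on_some_cball:
  fixes f :: "'i \<Rightarrow> 'a::complete_space \<Rightarrow> 'b::real_normed_vector"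
  assumes cont: "\<And>i. i \<in> I \<Longrightarrow> continuous_on UNIV (f i)"
    and pointwise: "\<And>x. \<exists>P. \<forall>i\<in>I. norm (f i x) \<le> P"
  shows "\<exists>x0 \<rho> M. \<rho> > 0 \<and> (\<forall>i\<in>I. \<forall>w\<in>cball x0 \<rho>. norm (f i w) \<le> M)"
proof -
  define F where "F n = (\<Inter>i\<in>I. {x. norm (f i x) \<le> real n})" for n :: nat
  have closed: "closed (F n)" for n
    unfolding F_def using cont by (intro closed_INT ballI closed_Collect_le continuous_intros) auto
  have "\<Union>(range F) = UNIV"
  proof -
    have "x \<in> \<Union>(range F)" for x
    proof -
      obtain P where "\<forall>i\<in>I. norm (f i x) \<le> P"
        using pointwise by blast
      moreover obtain n :: nat where "P \<le> real n"
        using real_arch_simple by blast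
      ultimately have "x \<in> F n"
        unfolding F_def by (auto intro: order_trans)
      then show ?thesis
        by blast
    qed
    then show ?thesis
      by blast
  qed
  then obtain n where "interior (F n) \<noteq> {}"
    using Baire_category_alt[of euclidean "range F"] completely_metrizable_space_euclidean closed
    by fastforce
  then obtain x0 \<rho> where "\<rho> > 0" "cball x0 \<rho> \<subseteq> F n"
    using mem_interior_cball by blast
  moreover from this(2) have "\<forall>i\<in>I. \<forall>w\<in>cball x0 \<rho>. norm (f i w) \<le> real n"
    by (auto simp: F_def)
  ultimately show ?thesis
    by blast
qed

lemma convex_operator_norm_le_of_upper_bounds:
  fixes T :: "'a::banach_lattice \<Rightarrow> 'a"
  assumes conv: "convex_operator T" and "T w \<le> u" "T (2 *\<^sub>R z - w) \<le> u'"
  shows "norm (T w) \<le> norm u + norm u' + 2 * norm (T z)"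
proof -
  have "2 *\<^sub>R T z \<le> T w + T (2 *\<^sub>R z - w)"
    using convex_operator_midpoint[OF conv, of z "w - z"] by (simp add: algebra_simps scaleR_2)
  also have "\<dots> \<le> T w + u'"
    using assms(3) by (rule add_left_mono)
  finally have "- T w \<le> u' - 2 *\<^sub>R T z"
    by (simp add: algebra_simps le_diff_eq)
  then have "norm (T w) \<le> norm u + norm (u' - 2 *\<^sub>R T z)"
    using assms(2) by (rule norm_le_of_le_and_neg_le[rotated])
  also have "\<dots> \<le> norm u + norm u' + 2 * norm (T z)"
    using norm_triangle_ineq4[of u' "2 *\<^sub>R T z"] by simp
  finally show ?thesis .
qed

lemma convex_family_bounded_on_cball:
  fixes T :: "'i \<Rightarrow> 'a::banach_lattice \<Rightarrow> 'a"
  assumes conv: "\<And>i. i \<in> I \<Longrightarrow> convex_operator (T i)"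
    and \<rho>0: "\<rho>0 > 0" and N: "\<forall>i\<in>I. \<forall>w\<in>cball x0 \<rho>0. norm (T i w) \<le> N"
    and pointwise: "\<And>x. \<exists>P. \<forall>i\<in>I. norm (T i x) \<le> P"
  shows "\<exists>\<rho>>0. \<exists>M. \<forall>i\<in>I. \<forall>w\<in>cball z \<rho>. norm (T i w) \<le> M"
proof -
  define u where "u = 2 *\<^sub>R z - x0"
  obtain Pu where Pu: "\<forall>i\<in>I. norm (T i u) \<le> Pu"
    using pointwise by blast
  obtain Pz where Pz: "\<forall>i\<in>I. norm (T i z) \<le> Pz"
    using pointwise by blast
  define U where "U i w = (1/2) *\<^sub>R T i u + (1/2) *\<^sub>R T i (x0 + 2 *\<^sub>R (w - z))" for i w
  have upper: "T i w \<le> U i w" and norm_upper: "norm (U i w) \<le> (Pu + N) / 2"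
    if i: "i \<in> I" and w: "w \<in> cball z (\<rho>0 / 2)" for i w
  proof -
    \<comment> \<open>\<open>w\<close> is the midpoint of the fixed point \<open>u\<close> and a point of \<open>cball x0 \<rho>0\<close>\<close>
    have "w = (1/2) *\<^sub>R u + (1 - 1/2) *\<^sub>R (x0 + 2 *\<^sub>R (w - z))"
      by (simp add: u_def algebra_simps)
    then show "T i w \<le> U i w"
      using convex_operatorD[OF conv[OF i], of "1/2" u "x0 + 2 *\<^sub>R (w - z)"] by (simp add: U_def)
    have "x0 + 2 *\<^sub>R (w - z) \<in> cball x0 \<rho>0"
      using w by (simp add: dist_norm norm_minus_commute)
    then have "norm (T i (x0 + 2 *\<^sub>R (w - z))) \<le> N"
      using N i by blast
    then show "norm (U i w) \<le> (Pu + N) / 2"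
      unfolding U_def using Pu i norm_triangle_ineq[of "(1/2) *\<^sub>R T i u" "(1/2) *\<^sub>R T i (x0 + 2 *\<^sub>R (w - z))"]
      by fastforce
  qed
  have "\<forall>i\<in>I. \<forall>w\<in>cball z (\<rho>0 / 2). norm (T i w) \<le> (Pu + N) + 2 * Pz"
  proof (intro ballI)
    fix i w assume i: "i \<in> I" and w: "w \<in> cball z (\<rho>0 / 2)"
    have "2 *\<^sub>R z - w \<in> cball z (\<rho>0 / 2)"
      using w by (simp add: dist_norm algebra_simps scaleR_2 norm_minus_commute)
    then have "norm (T i w) \<le> norm (U i w) + norm (U i (2 *\<^sub>R z - w)) + 2 * norm (T i z)"
      using convex_operator_norm_le_of_upper_bounds[OF conv[OF i] upper[OF i w] upper[OF i]] by blast
    then show "norm (T i w) \<le> (Pu + N) + 2 * Pz"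
      using norm_upper[OF i w] norm_upper[OF i \<open>2 *\<^sub>R z - w \<in> _\<close>] Pz i by fastforce
  qed
  moreover have "\<rho>0 / 2 > 0"
    using \<rho>0 by simp
  ultimately show ?thesis
    by blast
qed

lemma convex_family_locally_uniformly_lipschitz:
  fixes T :: "'i \<Rightarrow> 'a::banach_lattice \<Rightarrow> 'a"
  assumes conv: "\<And>i. i \<in> I \<Longrightarrow> convex_operator (T i)"
    and bdd: "\<And>i. i \<in> I \<Longrightarrow> bounded_operator (T i)"
    and pointwise: "\<And>x. \<exists>P. \<forall>i\<in>I. norm (T i x) \<le> P"
  shows "\<exists>\<rho>>0. \<exists>L. \<forall>i\<in>I. \<forall>x'\<in>cball z \<rho>. \<forall>x''\<in>cball z \<rho>.
           norm (T i x' - T i x'') \<le> L * norm (x' - x'')"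
proof -
  obtain x0 \<rho>0 N where "\<rho>0 > 0" "\<forall>i\<in>I. \<forall>w\<in>cball x0 \<rho>0. norm (T i w) \<le> N"
    using pointwise_bounded_imp_bounded_on_some_cball[of I T] pointwise
      convex_operator_continuous[OF conv bdd] by blast
  then obtain \<rho>1 M where \<rho>1: "\<rho>1 > 0" and M: "\<forall>i\<in>I. \<forall>w\<in>cball z \<rho>1. norm (T i w) \<le> M"
    using convex_family_bounded_on_cball[OF conv _ _ pointwise] by blast
  define \<rho> where "\<rho> = \<rho>1 / 3"
  have \<rho>: "\<rho> > 0"
    using \<rho>1 by (simp add: \<rho>_def)
  have "norm (T i x' - T i x'') \<le> 2 * M / \<rho> * norm (x' - x'')"
    if i: "i \<in> I" and x': "x' \<in> cball z \<rho>" and x'': "x'' \<in> cball z \<rho>" for i x' x''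
  proof -
    have "\<forall>w\<in>cball x'' (2 * \<rho>). norm (T i w) \<le> M"
    proof
      fix w assume "w \<in> cball x'' (2 * \<rho>)"
      then have "w \<in> cball z \<rho>1"
        using x'' dist_triangle[of z w x''] by (simp add: \<rho>_def)
      then show "norm (T i w) \<le> M"
        using M i by blast
    qed
    moreover have "x' \<in> cball x'' (2 * \<rho>)"
      using x' x'' dist_triangle[of x'' x' z] by (auto simp: dist_commute)
    ultimately have "norm (T i x' - T i x'') \<le> 4 * M / (2 * \<rho>) * norm (x' - x'')"
      using \<rho> by (intro convex_operator_lipschitz_at_center[OF conv[OF i]]) auto
    then show ?thesis
      by simp
  qed
  then show ?thesis
    using \<rho> by blast
qed

section \<open>Right derivatives\<close>

lemma right_mean_value_inequality:
  fixes f :: "real \<Rightarrow> 'b::real_normed_vector"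
  assumes ab: "a \<le> b" and cont: "continuous_on {a..b} f"
    and slope: "\<And>s. s \<in> {a..<b} \<Longrightarrow> \<forall>\<^sub>F h in at_right 0. norm (f (s + h) - f s) \<le> e * h"
  shows "norm (f b - f a) \<le> e * (b - a)"
proof -
  define E where "E = {s \<in> {a..b}. norm (f s - f a) \<le> e * (s - a)}"
  have "E = {a..b} \<inter> (\<lambda>s. norm (f s - f a) - e * (s - a)) -` {..0}"
    by (auto simp: E_def)
  moreover have "continuous_on {a..b} (\<lambda>s. norm (f s - f a) - e * (s - a))"
    by (intro continuous_intros cont)
  ultimately have "closed E"
    by (metis closed_atLeastAtMost closed_atMost continuous_closed_preimage)
  moreover have "a \<in> E" "bdd_above E"
    using ab by (auto simp: E_def intro: bdd_aboveI[of _ b])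
  ultimately have "Sup E \<in> E"
    using closed_contains_Sup by blast
  define c where "c = Sup E"
  have "c = b"
  proof (rule ccontr)
    assume "c \<noteq> b"
    with \<open>Sup E \<in> E\<close> have c: "a \<le> c" "c < b" "norm (f c - f a) \<le> e * (c - a)"
      by (auto simp: E_def c_def)
    obtain d where d: "d > 0" "\<And>h. 0 < h \<Longrightarrow> h < d \<Longrightarrow> norm (f (c + h) - f c) \<le> e * h"
      using slope[of c] c unfolding eventually_at_right_field by auto
    define h where "h = min (d / 2) (b - c)"
    have h: "0 < h" "h < d" "c + h \<le> b"
      using d c by (auto simp: h_def)
    have "norm (f (c + h) - f a) \<le> norm (f (c + h) - f c) + norm (f c - f a)"
      using norm_triangle_ineq[of "f (c + h) - f c" "f c - f a"] by simp
    also have "\<dots> \<le> e * (c + h - a)"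
      using d(2)[OF h(1,2)] c(3) by (simp add: algebra_simps)
    finally have "c + h \<in> E"
      using h c by (simp add: E_def)
    then have "c + h \<le> c"
      unfolding c_def using \<open>bdd_above E\<close> by (rule cSup_upper)
    then show False
      using h by simp
  qed
  then show ?thesis
    using \<open>Sup E \<in> E\<close> by (simp add: E_def c_def)
qed

lemma right_derivative_zero_imp_constant:
  fixes f :: "real \<Rightarrow> 'b::real_normed_vector"
  assumes ab: "a \<le> b" and cont: "continuous_on {a..b} f"
    and deriv: "\<And>s. s \<in> {a..<b} \<Longrightarrow> ((\<lambda>h. (1 / h) *\<^sub>R (f (s + h) - f s)) \<longlongrightarrow> 0) (at_right 0)"
  shows "f b = f a"
proof -
  have bound: "norm (f b - f a) \<le> e * (b - a)" if e: "e > 0" for e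
  proof (rule right_mean_value_inequality[OF ab cont])
    fix s assume "s \<in> {a..<b}"
    then have "\<forall>\<^sub>F h in at_right 0. norm ((1 / h) *\<^sub>R (f (s + h) - f s)) < e"
      using deriv e by (auto simp: tendsto_iff)
    then show "\<forall>\<^sub>F h in at_right 0. norm (f (s + h) - f s) \<le> e * h"
      using eventually_at_right_less[of 0]
      by eventually_elim (simp add: divide_less_eq mult.commute)
  qed
  have "norm (f b - f a) \<le> 0 + \<epsilon>" if "\<epsilon> > 0" for \<epsilon>
  proof (cases "a = b")
    case False
    then show ?thesis
      using ab that bound[of "\<epsilon> / (b - a)"] by simp
  qed (use that in simp)
  then show ?thesis
    using field_le_epsilon[of "norm (f b - f a)" 0] by simp
qed

section \<open>Convex C0-semigroups\<close>

lemma tendsto_generator: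
  assumes "x \<in> gen_domain S"
  shows "((\<lambda>h. (1 / h) *\<^sub>R (S h x - x)) \<longlongrightarrow> generator S x) (at_right 0)"
proof -
  obtain L where L: "((\<lambda>h. (1 / h) *\<^sub>R (S h x - x)) \<longlongrightarrow> L) (at_right 0)"
    using assms unfolding gen_domain_def by blast
  then have "generator S x = L"
    unfolding generator_def by (rule tendsto_Lim[rotated]) simp
  with L show ?thesis
    by simp
qed

locale convex_semigroup =
  fixes S :: "real \<Rightarrow> 'a::banach_lattice \<Rightarrow> 'a"
  assumes convex_C0: "convex_C0_semigroup S"
begin

lemma convex: "t \<ge> 0 \<Longrightarrow> convex_operator (S t)"
  and bounded: "t \<ge> 0 \<Longrightarrow> bounded_operator (S t)"
  and S_zero [simp]: "S 0 x = x"
  and S_add: "s \<ge> 0 \<Longrightarrow> t \<ge> 0 \<Longrightarrow> S (t + s) x = S t (S s x)"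
  and strongly_continuous: "((\<lambda>h. S h x) \<longlongrightarrow> x) (at_right 0)"
  using convex_C0 unfolding convex_C0_semigroup_def by (auto simp: fun_eq_iff)

lemma orbit_bounded: "\<exists>P. \<forall>r\<in>{0..t}. norm (S r x) \<le> P"
proof -
  have "\<forall>\<^sub>F h in at_right 0. norm (S h x) < norm x + 1"
    using tendsto_norm[OF strongly_continuous] by (rule order_tendstoD) simp
  then obtain b where b: "b > 0" "\<And>h. 0 < h \<Longrightarrow> h < b \<Longrightarrow> norm (S h x) < norm x + 1"
    unfolding eventually_at_right_field by auto
  define e where "e = b / 2"
  have e: "e > 0"
    using b by (simp add: e_def)
  have small: "norm (S h x) \<le> norm x + 1" if "0 \<le> h" "h \<le> e" for h
    using b(2)[of h] that by (cases "h = 0") (auto simp: e_def)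
  have "\<exists>B. \<forall>r\<in>{0..real n * e}. norm (S r x) \<le> B" for n
  proof (induction n)
    case (Suc n)
    then obtain B where B: "\<forall>r\<in>{0..real n * e}. norm (S r x) \<le> B"
      by blast
    have "0 \<le> real n * e"
      using e by simp
    then obtain C where C: "\<forall>w. norm w \<le> norm x + 1 \<longrightarrow> norm (S (real n * e) w) \<le> C"
      using bounded_operatorD[OF bounded] by blast
    have "norm (S r x) \<le> max B C" if r: "r \<in> {0..real (Suc n) * e}" for r
    proof (cases "r \<le> real n * e")
      case False
      \<comment> \<open>the last step of length at most \<open>e\<close> stays in the ball where \<open>S (n e)\<close> is bounded\<close>
      then have "S r x = S (real n * e) (S (r - real n * e) x)"
        using S_add[of "r - real n * e" "real n * e"] e by simp
      moreover have "norm (S (r - real n * e) x) \<le> norm x + 1"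
        using small False r by (simp add: algebra_simps)
      ultimately show ?thesis
        using C by fastforce
    next
      case True
      then have "norm (S r x) \<le> B"
        using B r by simp
      then show ?thesis
        by simp
    qed
    then show ?case
      by blast
  qed fastforce
  moreover obtain n :: nat where "t / e \<le> real n"
    using real_arch_simple by blast
  then have "{0..t} \<subseteq> {0..real n * e}"
    using e by (auto simp: field_simps)
  ultimately show ?thesis
    by blast
qed

lemma locally_uniformly_lipschitz:
  obtains \<rho> L where "\<rho> > 0"
    "\<And>r x' x''. r \<in> {0..t} \<Longrightarrow> x' \<in> cball z \<rho> \<Longrightarrow> x'' \<in> cball z \<rho> \<Longrightarrow>
       norm (S r x' - S r x'') \<le> L * norm (x' - x'')"
  using convex_family_locally_uniformly_lipschitz[of "{0..t}" S z] convex bounded orbit_bounded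
  by (metis atLeastAtMost_iff)

lemma orbit_continuous: "continuous_on {0..t} (\<lambda>r. S r z)"
  unfolding continuous_on_def
proof
  fix r0 assume r0: "r0 \<in> {0..t}"
  obtain \<rho> L where \<rho>: "\<rho> > 0" and lip: "\<And>r x' x''. r \<in> {0..t} \<Longrightarrow> x' \<in> cball z \<rho> \<Longrightarrow>
      x'' \<in> cball z \<rho> \<Longrightarrow> norm (S r x' - S r x'') \<le> L * norm (x' - x'')"
    using locally_uniformly_lipschitz by metis
  have "filterlim (\<lambda>r. \<bar>r - r0\<bar>) (at_right 0) (at r0 within {0..t})"
    unfolding filterlim_at
    by (auto simp: eventually_at_filter intro!: tendsto_rabs_zero LIM_zero tendsto_ident_at)
  then have near: "((\<lambda>r. S \<bar>r - r0\<bar> z) \<longlongrightarrow> z) (at r0 within {0..t})"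
    by (rule filterlim_compose[OF strongly_continuous])
  have "\<forall>\<^sub>F r in at r0 within {0..t}. norm (S r z - S r0 z) \<le> L * norm (S \<bar>r - r0\<bar> z - z)"
  proof -
    have "\<forall>\<^sub>F r in at r0 within {0..t}. r \<in> {0..t}"
      by (simp add: eventually_at_filter)
    with tendstoD[OF near \<rho>]
    have "\<forall>\<^sub>F r in at r0 within {0..t}. S \<bar>r - r0\<bar> z \<in> cball z \<rho> \<and> r \<in> {0..t}"
      by eventually_elim (auto simp: dist_commute)
    then show ?thesis
    proof eventually_elim
      case (elim r)
      \<comment> \<open>write the later time as the earlier one followed by \<open>\<bar>r - r0\<bar>\<close>\<close>
      show ?case
      proof (cases "r0 \<le> r")
        case True
        then show ?thesis
          using lip[OF r0, of "S (r - r0) z" z] S_add[of "r - r0" r0 z] r0 elim \<rho> by simp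
      next
        case False
        then show ?thesis
          using lip[of r "S (r0 - r) z" z] S_add[of "r0 - r" r z] elim \<rho>
          by (simp add: norm_minus_commute)
      qed
    qed
  qed
  then have "((\<lambda>r. S r z - S r0 z) \<longlongrightarrow> 0) (at r0 within {0..t})"
    by (rule Lim_null_comparison) (intro tendsto_mult_right_zero tendsto_norm_zero LIM_zero near)
  then show "((\<lambda>r. S r z) \<longlongrightarrow> S r0 z) (at r0 within {0..t})"
    by (simp add: LIM_zero_iff)
qed

lemma continuous_on_apply:
  assumes r: "continuous_on U r" and x: "continuous_on U x" and range: "r ` U \<subseteq> {0..t}"
  shows "continuous_on U (\<lambda>s. S (r s) (x s))"
  unfolding continuous_on_def
proof
  fix s0 assume s0: "s0 \<in> U"
  obtain \<rho> L where \<rho>: "\<rho> > 0" and lip: "\<And>r x' x''. r \<in> {0..t} \<Longrightarrow> x' \<in> cball (x s0) \<rho> \<Longrightarrow>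
      x'' \<in> cball (x s0) \<rho> \<Longrightarrow> norm (S r x' - S r x'') \<le> L * norm (x' - x'')"
    using locally_uniformly_lipschitz by metis
  have x_lim: "(x \<longlongrightarrow> x s0) (at s0 within U)"
    using x s0 by (simp add: continuous_on_def)
  have "((\<lambda>s. S (r s) (x s0)) \<longlongrightarrow> S (r s0) (x s0)) (at s0 within U)"
    using continuous_on_compose2[OF orbit_continuous r range] s0 by (simp add: continuous_on_def)
  moreover have "((\<lambda>s. S (r s) (x s) - S (r s) (x s0)) \<longlongrightarrow> 0) (at s0 within U)"
  proof (rule Lim_null_comparison)
    have "\<forall>\<^sub>F s in at s0 within U. s \<in> U"
      by (simp add: eventually_at_filter)
    with tendstoD[OF x_lim \<rho>] have "\<forall>\<^sub>F s in at s0 within U. x s \<in> cball (x s0) \<rho> \<and> s \<in> U"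
      by eventually_elim (auto simp: dist_commute)
    then show "\<forall>\<^sub>F s in at s0 within U. norm (S (r s) (x s) - S (r s) (x s0)) \<le> L * norm (x s - x s0)"
      by eventually_elim (use lip range \<rho> in auto)
    show "((\<lambda>s. L * norm (x s - x s0)) \<longlongrightarrow> 0) (at s0 within U)"
      by (intro tendsto_mult_right_zero tendsto_norm_zero LIM_zero x_lim)
  qed
  ultimately show "((\<lambda>s. S (r s) (x s)) \<longlongrightarrow> S (r s0) (x s0)) (at s0 within U)"
    using tendsto_add by fastforce
qed

lemma right_derivative_along_solution:
  assumes s: "0 \<le> s" "s < t" and dom: "y s \<in> gen_domain S"
    and y_deriv: "((\<lambda>h. (1 / h) *\<^sub>R (y (s + h) - y s)) \<longlongrightarrow> generator S (y s)) (at_right 0)"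
  shows "((\<lambda>h. (1 / h) *\<^sub>R (S (t - (s + h)) (y (s + h)) - S (t - s) (y s))) \<longlongrightarrow> 0) (at_right 0)"
proof -
  define z where "z = y s"
  define q where "q h = (1 / h) *\<^sub>R (y (s + h) - z) - (1 / h) *\<^sub>R (S h z - z)" for h
  have q: "(q \<longlongrightarrow> 0) (at_right 0)"
    unfolding q_def z_def using tendsto_diff[OF y_deriv tendsto_generator[OF dom]] by simp
  have "((\<lambda>h. h *\<^sub>R ((1 / h) *\<^sub>R (y (s + h) - z))) \<longlongrightarrow> 0 *\<^sub>R generator S z) (at_right 0)"
    using tendsto_ident_at y_deriv unfolding z_def by (rule tendsto_scaleR)
  moreover have "\<forall>\<^sub>F h in at_right 0. h *\<^sub>R ((1 / h) *\<^sub>R (y (s + h) - z)) = y (s + h) - z"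
    using eventually_at_right_less[of 0] by eventually_elim simp
  ultimately have "((\<lambda>h. y (s + h) - z) \<longlongrightarrow> 0) (at_right 0)"
    by (simp add: Lim_transform_eventually)
  then have y_lim: "((\<lambda>h. y (s + h)) \<longlongrightarrow> z) (at_right 0)"
    by (rule LIM_zero_cancel)
  obtain \<rho> L where \<rho>: "\<rho> > 0" and lip: "\<And>r x' x''. r \<in> {0..t} \<Longrightarrow> x' \<in> cball z \<rho> \<Longrightarrow>
      x'' \<in> cball z \<rho> \<Longrightarrow> norm (S r x' - S r x'') \<le> L * norm (x' - x'')"
    using locally_uniformly_lipschitz by metis
  have "0 < t - s"
    using s by simp
  have "\<forall>\<^sub>F h in at_right 0. 0 < h \<and> h < t - s \<and> y (s + h) \<in> cball z \<rho> \<and> S h z \<in> cball z \<rho>"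
    using eventually_at_right_real[OF \<open>0 < t - s\<close>] tendstoD[OF y_lim \<rho>]
      tendstoD[OF strongly_continuous[of z] \<rho>]
    by eventually_elim (auto simp: dist_commute)
  then have "\<forall>\<^sub>F h in at_right 0.
      norm ((1 / h) *\<^sub>R (S (t - (s + h)) (y (s + h)) - S (t - s) z)) \<le> L * norm (q h)"
  proof eventually_elim
    case (elim h)
    \<comment> \<open>both terms are \<open>S (t - s - h)\<close> applied to points near \<open>z\<close>, which differ by \<open>h *\<^sub>R q h\<close>\<close>
    have "S (t - s) z = S (t - (s + h)) (S h z)"
      using S_add[of h "t - (s + h)" z] elim by simp
    moreover have "y (s + h) - S h z = h *\<^sub>R q h"
      using elim by (simp add: q_def algebra_simps)
    ultimately have "norm (S (t - (s + h)) (y (s + h)) - S (t - s) z) \<le> L * (h * norm (q h))"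
      using lip[of "t - (s + h)" "y (s + h)" "S h z"] elim s by simp
    then have "norm (S (t - (s + h)) (y (s + h)) - S (t - s) z) / h \<le> L * norm (q h)"
      using elim by (simp add: divide_le_eq ac_simps)
    then show ?case
      using elim by (simp only: norm_scaleR) simp
  qed
  moreover have "((\<lambda>h. L * norm (q h)) \<longlongrightarrow> 0) (at_right 0)"
    using tendsto_mult_right_zero[OF tendsto_norm_zero[OF q]] .
  ultimately show ?thesis
    unfolding z_def by (rule Lim_null_comparison)
qed

end

theorem theorem3p5:
  fixes S :: "real \<Rightarrow> 'a::banach_lattice \<Rightarrow> 'a"
    and y :: "real \<Rightarrow> 'a"
  assumes "order_continuous_norm TYPE('a)"
    and "convex_C0_semigroup S"
    and "continuous_on {0..} y"
    and "\<And>t. t \<ge> 0 \<Longrightarrow> y t \<in> gen_domain S"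
    and "\<And>t. t \<ge> 0 \<Longrightarrow>
           ((\<lambda>h. (1 / h) *\<^sub>R (y (t + h) - y t)) \<longlongrightarrow> generator S (y t)) (at_right 0)"
  shows "\<forall>t\<ge>0. y t = S t (y 0)"
proof (intro allI impI)
  fix t :: real
  assume t: "t \<ge> 0"
  interpret convex_semigroup S
    by unfold_locales (fact assms(2))
  define \<phi> where "\<phi> s = S (t - s) (y s)" for s
  have "continuous_on {0..t} \<phi>"
    unfolding \<phi>_def
    by (rule continuous_on_apply[where t = t])
      (auto intro!: continuous_intros continuous_on_subset[OF assms(3)])
  moreover have "((\<lambda>h. (1 / h) *\<^sub>R (\<phi> (s + h) - \<phi> s)) \<longlongrightarrow> 0) (at_right 0)" if "s \<in> {0..<t}" for s
    unfolding \<phi>_def using that assms(4,5) by (intro right_derivative_along_solution) auto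
  ultimately have "\<phi> t = \<phi> 0"
    by (rule right_derivative_zero_imp_constant[OF t])
  then show "y t = S t (y 0)"
    by (simp add: \<phi>_def)
qed

end
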